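(* Let $H$ be normalised. Then for every integer $j\ge1$, $c^{2j}>\frac1q\mathrm{Tr}\,L^{2j}$.
   Context: Let $q\ge 2$ be an integer and let $(a_n)_{n\in\mathbb Z}$, $(b_n)_{n\in\mathbb Z}$ be real sequences with $a_n>0$, $a_{n+q}=a_n$, $b_{n+q}=b_n$ for all $n$. $H$ is the operator on $\ell^2(\mathbb Z)$ given by $(H\psi)_n=a_{n-1}\psi_{n-1}+b_n\psi_n+a_n\psi_{n+1}$. For $\lambda\in\mathbb C$ let $\phi(\lambda),\theta(\lambda)$ be the solutions of $a_{n-1}\psi_{n-1}+b_n\psi_n+a_n\psi_{n+1}=\lambda\psi_n$ ($n\in\mathbb Z$) with $\phi_0=0,\phi_1=1$ and $\theta_0=1,\theta_1=0$; the discriminant is $D(\lambda)=\phi_{q+1}(\lambda)+\theta_q(\lambda)$. The spectrum of $H$ is $\{\lambda\in\mathbb R:|D(\lambda)|\le 2\}$, with smallest point $\lambda^+_0$ and largest point $\lambda^-_q$; $c=(\lambda^-_q-\lambda^+_0)/2$. $H$ is called normalised if $\lambda^+_0=-\lambda^-_q$. The matrix $L$ is defined by $L=\begin{pmatrix} b_1 & a_1+ia_2\\ a_1-ia_2 & b_2\end{pmatrix}$ if $q=2$, and for $q\ge 3$ by $L_{jj}=b_j$, $L_{j,j+1}=L_{j+1,j}=a_j$ ($1\le j\le q-1$), $L_{1q}=ia_q$, $L_{q1}=-ia_q$, other entries $0$. *)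

theory Defs
  imports "HOL-Analysis.Analysis" "Jordan_Normal_Form.Matrix"
begin

definition jacobi_sol :: "(int \<Rightarrow> real) \<Rightarrow> (int \<Rightarrow> real) \<Rightarrow> complex \<Rightarrow> (int \<Rightarrow> complex) \<Rightarrow> bool" where
  "jacobi_sol a b lam psi \<longleftrightarrow>
     (\<forall>n. of_real (a (n - 1)) * psi (n - 1) + of_real (b n) * psi n + of_real (a n) * psi (n + 1)
          = lam * psi n)"

definition jac_phi :: "(int \<Rightarrow> real) \<Rightarrow> (int \<Rightarrow> real) \<Rightarrow> complex \<Rightarrow> int \<Rightarrow> complex" where
  "jac_phi a b lam = (THE psi. jacobi_sol a b lam psi \<and> psi 0 = 0 \<and> psi 1 = 1)"

definition jac_theta :: "(int \<Rightarrow> real) \<Rightarrow> (int \<Rightarrow> real) \<Rightarrow> complex \<Rightarrow> int \<Rightarrow> complex" where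
  "jac_theta a b lam = (THE psi. jacobi_sol a b lam psi \<and> psi 0 = 1 \<and> psi 1 = 0)"

definition discr :: "(int \<Rightarrow> real) \<Rightarrow> (int \<Rightarrow> real) \<Rightarrow> nat \<Rightarrow> complex \<Rightarrow> complex" where
  "discr a b q lam = jac_phi a b lam (int q + 1) + jac_theta a b lam (int q)"

definition jac_spectrum :: "(int \<Rightarrow> real) \<Rightarrow> (int \<Rightarrow> real) \<Rightarrow> nat \<Rightarrow> real set" where
  "jac_spectrum a b q = {lam::real. cmod (discr a b q (of_real lam)) \<le> 2}"

definition lam_min :: "(int \<Rightarrow> real) \<Rightarrow> (int \<Rightarrow> real) \<Rightarrow> nat \<Rightarrow> real" where
  "lam_min a b q = Inf (jac_spectrum a b q)"

definition lam_max :: "(int \<Rightarrow> real) \<Rightarrow> (int \<Rightarrow> real) \<Rightarrow> nat \<Rightarrow> real" where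
  "lam_max a b q = Sup (jac_spectrum a b q)"

definition jac_c :: "(int \<Rightarrow> real) \<Rightarrow> (int \<Rightarrow> real) \<Rightarrow> nat \<Rightarrow> real" where
  "jac_c a b q = (lam_max a b q - lam_min a b q) / 2"

definition normalised :: "(int \<Rightarrow> real) \<Rightarrow> (int \<Rightarrow> real) \<Rightarrow> nat \<Rightarrow> bool" where
  "normalised a b q \<longleftrightarrow> lam_min a b q = - lam_max a b q"

text \<open>The q x q matrix L (0-indexed: entry (i,k) is the paper's L_{i+1,k+1}).\<close>
definition Lmat :: "(int \<Rightarrow> real) \<Rightarrow> (int \<Rightarrow> real) \<Rightarrow> nat \<Rightarrow> complex mat" where
  "Lmat a b q =
    (if q = 2 then
       mat 2 2 (\<lambda>(i,k).
         if i = 0 \<and> k = 0 then of_real (b 1)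
         else if i = 0 \<and> k = 1 then of_real (a 1) + \<i> * of_real (a 2)
         else if i = 1 \<and> k = 0 then of_real (a 1) - \<i> * of_real (a 2)
         else of_real (b 2))
     else
       mat q q (\<lambda>(i,k).
         if i = k then of_real (b (int i + 1))
         else if k = i + 1 then of_real (a (int i + 1))
         else if i = k + 1 then of_real (a (int k + 1))
         else if i = 0 \<and> k = q - 1 then \<i> * of_real (a (int q))
         else if i = q - 1 \<and> k = 0 then - \<i> * of_real (a (int q))
         else 0))"

definition mtrace :: "complex mat \<Rightarrow> complex" where
  "mtrace A = (\<Sum>i<dim_row A. A $$ (i, i))"

end

theory Submission imports Defs "Jordan_Normal_Form.Schur_Decomposition" begin

text \<open>
  Let \<open>\<theta>, \<phi>\<close> be the fundamental solutions. By constancy of the Wronskian the monodromy matrix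
  \<open>((\<theta>\<^sub>q, \<phi>\<^sub>q), (\<theta>\<^sub>q\<^sub>+\<^sub>1, \<phi>\<^sub>q\<^sub>+\<^sub>1))\<close> has determinant 1 and trace \<open>D\<close>, so a nonzero solution with
  \<open>\<psi>(n + q) = r \<psi>(n)\<close> exists iff \<open>r\<^sup>2 - D r + 1 = 0\<close>. The matrix \<open>L\<close> is \<open>H\<close> acting on solutions with
  \<open>\<psi>(n + q) = -\<i> \<psi>(n)\<close>, one period of which is a vector in \<open>\<complex>\<^sup>q\<close>; hence every eigenvalue \<open>\<mu>\<close>
  of \<open>L\<close> satisfies \<open>D(\<mu>) = 0\<close>, and \<open>\<mu>\<close> is real because \<open>L\<close> is Hermitian. Continuity of \<open>D\<close> puts
  \<open>\<mu>\<close> strictly inside the spectrum, which for normalised \<open>H\<close> is contained in \<open>[-c, c]\<close> (it is bounded,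
  since a unimodular Floquet solution attains its maximal modulus). So \<open>|\<mu>| < c\<close>, and
  \<open>Tr L\<^sup>2\<^sup>j = \<Sum> \<mu>\<^sub>i\<^sup>2\<^sup>j < q c\<^sup>2\<^sup>j\<close> by Schur triangularisation.
\<close>

section \<open>Solutions of the Jacobi recurrence\<close>

fun jacobi_forward :: "(int \<Rightarrow> real) \<Rightarrow> (int \<Rightarrow> real) \<Rightarrow> complex \<Rightarrow> complex \<Rightarrow> complex \<Rightarrow> nat \<Rightarrow> complex" where
  "jacobi_forward a b l x0 x1 0 = x0"
| "jacobi_forward a b l x0 x1 (Suc 0) = x1"
| "jacobi_forward a b l x0 x1 (Suc (Suc k)) =
     ((l - of_real (b (int k + 1))) * jacobi_forward a b l x0 x1 (Suc k)
       - of_real (a (int k)) * jacobi_forward a b l x0 x1 k) / of_real (a (int k + 1))"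

lemma jacobi_forward_rec:
  assumes "a (int k + 1) \<noteq> 0"
  shows "of_real (a (int k)) * jacobi_forward a b l x0 x1 k + of_real (b (int k + 1)) * jacobi_forward a b l x0 x1 (Suc k)
           + of_real (a (int k + 1)) * jacobi_forward a b l x0 x1 (Suc (Suc k)) = l * jacobi_forward a b l x0 x1 (Suc k)"
  using assms by (simp add: field_simps)

lemma isCont_jacobi_forward:
  assumes "\<And>n. a n \<noteq> 0"
  shows "isCont (\<lambda>l. jacobi_forward a b l x0 x1 k) l0"
  by (induction k rule: induct_nat_012) (auto intro!: continuous_intros simp: assms)

lemma jacobi_forward_of_real_in_Reals:
  "jacobi_forward a b (of_real x) (of_real u) (of_real v) k \<in> \<real>"
  by (induction k rule: induct_nat_012) (auto intro!: Reals_diff Reals_mult Reals_divide)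

text \<open>Backwards the recurrence is again a forward recurrence, for the reflected coefficients
  \<open>n \<mapsto> a (- n)\<close>, \<open>n \<mapsto> b (1 - n)\<close> and the sequence \<open>n \<mapsto> \<psi> (1 - n)\<close>.\<close>
definition jacobi_solution :: "(int \<Rightarrow> real) \<Rightarrow> (int \<Rightarrow> real) \<Rightarrow> complex \<Rightarrow> complex \<Rightarrow> complex \<Rightarrow> int \<Rightarrow> complex" where
  "jacobi_solution a b l x0 x1 n =
     (if n \<ge> 0 then jacobi_forward a b l x0 x1 (nat n)
      else jacobi_forward (\<lambda>n. a (- n)) (\<lambda>n. b (1 - n)) l x1 x0 (nat (1 - n)))"

lemma jacobi_solution_of_nat: "jacobi_solution a b l x0 x1 (int k) = jacobi_forward a b l x0 x1 k"
  by (simp add: jacobi_solution_def)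

lemma jacobi_solution_le_1:
  assumes "n \<le> 1"
  shows "jacobi_solution a b l x0 x1 n = jacobi_forward (\<lambda>n. a (- n)) (\<lambda>n. b (1 - n)) l x1 x0 (nat (1 - n))"
proof -
  have "n < 0 \<or> n = 0 \<or> n = 1" using assms by linarith
  then show ?thesis by (auto simp: jacobi_solution_def)
qed

lemma jacobi_sol_jacobi_solution:
  assumes a0: "\<And>n. a n \<noteq> 0"
  shows "jacobi_sol a b l (jacobi_solution a b l x0 x1)"
  unfolding jacobi_sol_def
proof
  fix n :: int
  show "of_real (a (n - 1)) * jacobi_solution a b l x0 x1 (n - 1) + of_real (b n) * jacobi_solution a b l x0 x1 n
        + of_real (a n) * jacobi_solution a b l x0 x1 (n + 1) = l * jacobi_solution a b l x0 x1 n"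
  proof (cases "n \<ge> 1")
    case True
    define k where "k = nat (n - 1)"
    then have n: "n = int k + 1" using True by simp
    have "n - 1 = int k" "n + 1 = int (Suc (Suc k))" "n = int (Suc k)" using n by simp_all
    then show ?thesis using jacobi_forward_rec[of a k b l x0 x1, OF a0] n
      by (simp only: jacobi_solution_of_nat)
  next
    case False
    define k where "k = nat (- n)"
    then have n: "n = - int k" using False by simp
    let ?f = "jacobi_forward (\<lambda>n. a (- n)) (\<lambda>n. b (1 - n)) l x1 x0"
    have "nat (1 - (n + 1)) = k" "nat (1 - n) = Suc k" "nat (1 - (n - 1)) = Suc (Suc k)" using n by simp_all
    then have ext: "jacobi_solution a b l x0 x1 (n + 1) = ?f k" "jacobi_solution a b l x0 x1 n = ?f (Suc k)"
      "jacobi_solution a b l x0 x1 (n - 1) = ?f (Suc (Suc k))"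
      using False by (simp_all add: jacobi_solution_le_1)
    have "- (int k + 1) = n - 1" "1 - (int k + 1) = n" "- int k = n" using n by simp_all
    then have "of_real (a n) * ?f k + of_real (b n) * ?f (Suc k) + of_real (a (n - 1)) * ?f (Suc (Suc k))
        = l * ?f (Suc k)"
      using jacobi_forward_rec[of "\<lambda>n. a (- n)" k "\<lambda>n. b (1 - n)" l x1 x0] a0 by simp
    then show ?thesis unfolding ext by (simp add: algebra_simps)
  qed
qed

lemma jacobi_sol_unique:
  assumes a0: "\<And>n. a n \<noteq> 0"
    and psi: "jacobi_sol a b l psi" and chi: "jacobi_sol a b l chi"
    and "psi 0 = chi 0" "psi 1 = chi 1"
  shows "psi = chi"
proof -
  have fw: "f (n + 1) = (l * f n - of_real (a (n - 1)) * f (n - 1) - of_real (b n) * f n) / of_real (a n)"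
    and bw: "f (n - 1) = (l * f n - of_real (a n) * f (n + 1) - of_real (b n) * f n) / of_real (a (n - 1))"
    if "jacobi_sol a b l f" for f n
    using that a0 unfolding jacobi_sol_def by (auto simp: field_simps)
  have up: "psi (int k) = chi (int k) \<and> psi (int k + 1) = chi (int k + 1)" for k
  proof (induction k)
    case (Suc k)
    then show ?case using fw[OF psi, of "int k + 1"] fw[OF chi, of "int k + 1"] by (simp add: add.commute)
  qed (use assms in simp)
  have down: "psi (- int k) = chi (- int k) \<and> psi (1 - int k) = chi (1 - int k)" for k
  proof (induction k)
    case (Suc k)
    have "psi (- int k - 1) = chi (- int k - 1)"
      using Suc bw[OF psi, of "- int k"] bw[OF chi, of "- int k"] by simp
    moreover have "- int (Suc k) = - int k - 1" "1 - int (Suc k) = - int k" by simp_all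
    ultimately show ?case using Suc by (simp only:)
  qed (use assms in simp)
  show ?thesis
  proof
    fix n :: int
    show "psi n = chi n"
      using up[of "nat n"] down[of "nat (- n)"] by (cases "n \<ge> 0") simp_all
  qed
qed

lemma jacobi_solution_0_1 [simp]:
  "jacobi_solution a b l x0 x1 0 = x0" "jacobi_solution a b l x0 x1 1 = x1"
  by (simp_all add: jacobi_solution_def)

lemma the_jacobi_sol_eq_jacobi_solution:
  assumes "\<And>n. a n \<noteq> 0"
  shows "(THE psi. jacobi_sol a b l psi \<and> psi 0 = x0 \<and> psi 1 = x1) = jacobi_solution a b l x0 x1"
  using jacobi_sol_jacobi_solution[of a b l x0 x1, OF assms] jacobi_sol_unique[of a b l, OF assms]
  by (intro the_equality) auto

lemma jac_phi_eq_jacobi_solution: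
  assumes "\<And>n. a n \<noteq> 0"
  shows "jac_phi a b l = jacobi_solution a b l 0 1"
  unfolding jac_phi_def by (rule the_jacobi_sol_eq_jacobi_solution[OF assms])

lemma jac_theta_eq_jacobi_solution:
  assumes "\<And>n. a n \<noteq> 0"
  shows "jac_theta a b l = jacobi_solution a b l 1 0"
  unfolding jac_theta_def by (rule the_jacobi_sol_eq_jacobi_solution[OF assms])

lemma jacobi_sol_lincomb:
  assumes "jacobi_sol a b l f" "jacobi_sol a b l g"
  shows "jacobi_sol a b l (\<lambda>n. u * f n + v * g n)"
  unfolding jacobi_sol_def
proof
  fix n
  have "of_real (a (n - 1)) * f (n - 1) + of_real (b n) * f n + of_real (a n) * f (n + 1) = l * f n"
    "of_real (a (n - 1)) * g (n - 1) + of_real (b n) * g n + of_real (a n) * g (n + 1) = l * g n"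
    using assms unfolding jacobi_sol_def by blast+
  then have "u * (of_real (a (n - 1)) * f (n - 1) + of_real (b n) * f n + of_real (a n) * f (n + 1))
      + v * (of_real (a (n - 1)) * g (n - 1) + of_real (b n) * g n + of_real (a n) * g (n + 1))
      = l * (u * f n + v * g n)"
    by (simp add: algebra_simps)
  then show "of_real (a (n - 1)) * (u * f (n - 1) + v * g (n - 1)) + of_real (b n) * (u * f n + v * g n)
      + of_real (a n) * (u * f (n + 1) + v * g (n + 1)) = l * (u * f n + v * g n)"
    by (simp add: algebra_simps)
qed

lemma jacobi_sol_eq_lincomb_theta_phi:
  assumes a0: "\<And>n. a n \<noteq> 0" and psi: "jacobi_sol a b l psi"
  shows "psi = (\<lambda>n. psi 0 * jac_theta a b l n + psi 1 * jac_phi a b l n)"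
proof (rule jacobi_sol_unique[OF a0 psi])
  show "jacobi_sol a b l (\<lambda>n. psi 0 * jac_theta a b l n + psi 1 * jac_phi a b l n)"
    by (intro jacobi_sol_lincomb)
      (simp_all add: jac_theta_eq_jacobi_solution jac_phi_eq_jacobi_solution a0 jacobi_sol_jacobi_solution)
qed (simp_all add: jac_theta_eq_jacobi_solution jac_phi_eq_jacobi_solution a0)

lemma jacobi_wronskian_constant:
  assumes f: "jacobi_sol a b l f" and g: "jacobi_sol a b l g"
  shows "of_real (a (int k)) * (f (int k) * g (int k + 1) - f (int k + 1) * g (int k))
           = of_real (a 0) * (f 0 * g 1 - f 1 * g 0)"
proof (induction k)
  case (Suc k)
  define m where "m = int k + 1"
  have "of_real (a (m - 1)) * f (m - 1) + of_real (b m) * f m + of_real (a m) * f (m + 1) = l * f m"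
    "of_real (a (m - 1)) * g (m - 1) + of_real (b m) * g m + of_real (a m) * g (m + 1) = l * g m"
    using f g unfolding jacobi_sol_def by blast+
  moreover have "C * (F1 * G2 - F2 * G1) = A * (F0 * G1 - F1 * G0)"
    if "A * F0 + B * F1 + C * F2 = l * F1" "A * G0 + B * G1 + C * G2 = l * G1"
    for A B C F0 F1 F2 G0 G1 G2 :: complex
  proof -
    have "C * (F1 * G2 - F2 * G1) - A * (F0 * G1 - F1 * G0)
        = F1 * (A * G0 + B * G1 + C * G2 - l * G1) - G1 * (A * F0 + B * F1 + C * F2 - l * F1)"
      by (simp add: algebra_simps)
    then show ?thesis using that by simp
  qed
  ultimately have "of_real (a m) * (f m * g (m + 1) - f (m + 1) * g m)
      = of_real (a (m - 1)) * (f (m - 1) * g m - f m * g (m - 1))"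
    by blast
  then show ?case using Suc by (simp add: m_def ac_simps)
qed simp

lemma
  assumes "\<And>n. a n \<noteq> 0"
  shows jacobi_sol_theta: "jacobi_sol a b l (jac_theta a b l)"
    and jacobi_sol_phi: "jacobi_sol a b l (jac_phi a b l)"
    and jac_theta_0_1: "jac_theta a b l 0 = 1 \<and> jac_theta a b l 1 = 0"
    and jac_phi_0_1: "jac_phi a b l 0 = 0 \<and> jac_phi a b l 1 = 1"
  by (simp_all add: jac_theta_eq_jacobi_solution jac_phi_eq_jacobi_solution jacobi_sol_jacobi_solution assms)

lemma discr_eq_jacobi_forward:
  assumes "\<And>n. a n \<noteq> 0"
  shows "discr a b q l = jacobi_forward a b l 0 1 (Suc q) + jacobi_forward a b l 1 0 q"
proof -
  have "int q + 1 = int (Suc q)" by simp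
  then show ?thesis
    unfolding discr_def jac_phi_eq_jacobi_solution[OF assms] jac_theta_eq_jacobi_solution[OF assms]
    by (simp only: jacobi_solution_of_nat)
qed

lemma discr_of_real_in_Reals:
  assumes "\<And>n. a n \<noteq> 0"
  shows "discr a b q (of_real x) \<in> \<real>"
  using jacobi_forward_of_real_in_Reals[of a b x 0 1 "Suc q"] jacobi_forward_of_real_in_Reals[of a b x 1 0 q]
  by (simp add: discr_eq_jacobi_forward[OF assms])

lemma isCont_discr_of_real:
  assumes "\<And>n. a n \<noteq> 0"
  shows "isCont (\<lambda>x::real. discr a b q (of_real x)) t"
  unfolding discr_eq_jacobi_forward[OF assms]
  by (intro continuous_intros isCont_o2[OF continuous_of_real[OF continuous_ident] isCont_jacobi_forward[OF assms]])

lemma jacobi_sol_agree_initial_segment: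
  assumes a0: "\<And>n. a n \<noteq> 0" and sol: "jacobi_sol a b l psi"
    and rec: "\<And>k. k < m \<Longrightarrow> of_real (a (int k)) * f (int k) + of_real (b (int k + 1)) * f (int k + 1)
                 + of_real (a (int k + 1)) * f (int k + 2) = l * f (int k + 1)"
    and "psi 0 = f 0" "psi 1 = f 1"
  shows "k \<le> m + 1 \<Longrightarrow> psi (int k) = f (int k)"
proof (induction k rule: induct_nat_012)
  case (ge2 k)
  have "int k + 1 - 1 = int k" "int k + 1 + 1 = int k + 2" by simp_all
  then have "of_real (a (int k)) * psi (int k) + of_real (b (int k + 1)) * psi (int k + 1)
      + of_real (a (int k + 1)) * psi (int k + 2) = l * psi (int k + 1)"
    using sol unfolding jacobi_sol_def by metis
  moreover have "psi (int k) = f (int k)" "psi (int k + 1) = f (int k + 1)" "k < m"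
    using ge2 by (simp_all add: add.commute)
  ultimately have r: "of_real (a (int k)) * f (int k) + of_real (b (int k + 1)) * f (int k + 1)
      + of_real (a (int k + 1)) * psi (int k + 2) = l * f (int k + 1)"
    by simp
  have "of_real (a (int k + 1)) * psi (int k + 2) = of_real (a (int k + 1)) * f (int k + 2)"
    by (rule add_left_imp_eq[OF trans[OF r rec[OF \<open>k < m\<close>, symmetric]]])
  then have "psi (int k + 2) = f (int k + 2)"
    using a0[of "int k + 1"] by simp
  then show ?case by (simp add: add.commute)
qed (use assms in simp_all)

section \<open>Linear algebra\<close>

lemma char_eq_of_left_eigenvector_2x2:
  fixes r p0 p1 X Y Z W :: "'a :: idom"
  assumes "r * p0 = p0 * X + p1 * Z" "r * p1 = p0 * Y + p1 * W" "p0 \<noteq> 0 \<or> p1 \<noteq> 0"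
  shows "r\<^sup>2 - (X + W) * r + (X * W - Y * Z) = 0"
proof -
  have "p0 * (r\<^sup>2 - (X + W) * r + (X * W - Y * Z)) = (r - W) * (r * p0 - p0 * X - p1 * Z) + Z * (r * p1 - p0 * Y - p1 * W)"
    "p1 * (r\<^sup>2 - (X + W) * r + (X * W - Y * Z)) = (r - X) * (r * p1 - p0 * Y - p1 * W) + Y * (r * p0 - p0 * X - p1 * Z)"
    by (simp_all add: algebra_simps power2_eq_square)
  then show ?thesis using assms by auto
qed

lemma left_eigenvector_2x2_of_char_eq:
  fixes r X Y Z W :: "'a :: idom"
  assumes "r\<^sup>2 - (X + W) * r + (X * W - Y * Z) = 0"
  obtains p0 p1 where "r * p0 = p0 * X + p1 * Z" "r * p1 = p0 * Y + p1 * W" "p0 \<noteq> 0 \<or> p1 \<noteq> 0"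
proof -
  have char: "(r - X) * (r - W) = Y * Z" using assms by (simp add: algebra_simps power2_eq_square)
  consider "Z \<noteq> 0" | "Y \<noteq> 0" | "Y = 0" "Z = 0" by blast
  then show ?thesis
  proof cases
    case 1
    with char show ?thesis by (intro that[of Z "r - X"]) (simp_all add: algebra_simps)
  next
    case 2
    with char show ?thesis by (intro that[of "r - W" Y]) (simp_all add: algebra_simps)
  next
    case 3
    with char have "r = X \<or> r = W" by simp
    with 3 show ?thesis using that[of 1 0] that[of 0 1] by auto
  qed
qed

lemma hermitian_eigenvalue_real:
  fixes A :: "complex mat"
  assumes A: "A \<in> carrier_mat n n" and herm: "\<And>i k. i < n \<Longrightarrow> k < n \<Longrightarrow> cnj (A $$ (i, k)) = A $$ (k, i)"
    and "eigenvalue A \<mu>"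
  shows "\<mu> \<in> \<real>"
proof -
  obtain v where v: "v \<in> carrier_vec n" "v \<noteq> 0\<^sub>v n" and Av: "A *\<^sub>v v = \<mu> \<cdot>\<^sub>v v"
    using assms(3) A unfolding eigenvalue_def eigenvector_def by auto
  define S where "S = (\<Sum>i<n. cnj (v $ i) * (A *\<^sub>v v) $ i)"
  define N where "N = (\<Sum>i<n. (cmod (v $ i))\<^sup>2)"
  have "S = (\<Sum>i<n. \<mu> * (v $ i * cnj (v $ i)))"
    unfolding S_def Av using v by (intro sum.cong) auto
  also have "\<dots> = \<mu> * of_real N"
    unfolding N_def by (simp add: sum_distrib_left flip: complex_norm_square)
  finally have SN: "S = \<mu> * of_real N" .
  obtain i where i: "i < n" "v $ i \<noteq> 0" using v by (metis carrier_vecD eq_vecI index_zero_vec)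
  have "(cmod (v $ i))\<^sup>2 \<le> N" unfolding N_def by (rule member_le_sum) (use i in auto)
  moreover have "0 < (cmod (v $ i))\<^sup>2" using i by simp
  ultimately have "0 < N" by linarith
  have S2: "S = (\<Sum>i<n. \<Sum>k<n. cnj (v $ i) * A $$ (i, k) * v $ k)"
    unfolding S_def using A v by (intro sum.cong) (auto simp: scalar_prod_def atLeast0LessThan sum_distrib_left mult.assoc)
  have "cnj S = (\<Sum>i<n. \<Sum>k<n. v $ i * A $$ (k, i) * cnj (v $ k))"
    unfolding S2 by (simp add: cnj_sum herm)
  also have "\<dots> = S"
    unfolding S2 by (subst sum.swap) (simp add: mult_ac)
  finally have "S \<in> \<real>" using Reals_cnj_iff by blast
  moreover have "\<mu> = S / of_real N" using SN \<open>0 < N\<close> by simp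
  ultimately show ?thesis by (auto intro: Reals_divide)
qed

lemma mtrace_mult_comm:
  assumes "A \<in> carrier_mat n m" "B \<in> carrier_mat m n"
  shows "mtrace (A * B) = mtrace (B * A)"
proof -
  have "mtrace (A * B) = (\<Sum>i<n. \<Sum>k<m. A $$ (i, k) * B $$ (k, i))"
    unfolding mtrace_def using assms by (intro sum.cong) (auto simp: scalar_prod_def atLeast0LessThan)
  also have "\<dots> = (\<Sum>k<m. \<Sum>i<n. B $$ (k, i) * A $$ (i, k))"
    by (subst sum.swap) (simp add: mult.commute)
  also have "\<dots> = mtrace (B * A)"
    unfolding mtrace_def using assms by (intro sum.cong) (auto simp: scalar_prod_def atLeast0LessThan)
  finally show ?thesis .
qed

lemma upper_triangular_mult:
  fixes A B :: "'a :: semiring_0 mat"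
  assumes A: "A \<in> carrier_mat n n" "upper_triangular A" and B: "B \<in> carrier_mat n n" "upper_triangular B"
  shows "upper_triangular (A * B)"
    and "i < n \<Longrightarrow> (A * B) $$ (i, i) = A $$ (i, i) * B $$ (i, i)"
proof -
  have entry: "(A * B) $$ (i, j) = (\<Sum>l<n. A $$ (i, l) * B $$ (l, j))" if "i < n" "j < n" for i j
    using A B that by (simp add: scalar_prod_def atLeast0LessThan)
  have zero: "A $$ (i, l) * B $$ (l, j) = 0" if "i < n" "l < n" "l \<noteq> i \<or> j < i" "j \<le> i" for i j l
    using A B that by (cases "l < i") (auto simp: upper_triangularD)
  show "upper_triangular (A * B)"
  proof
    fix i j assume ij: "j < i" "i < dim_row (A * B)"
    then have "i < n" "j < n" using A by auto
    then show "(A * B) $$ (i, j) = 0" unfolding entry[OF \<open>i < n\<close> \<open>j < n\<close>]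
      using zero ij(1) by (intro sum.neutral) auto
  qed
  show "(A * B) $$ (i, i) = A $$ (i, i) * B $$ (i, i)" if "i < n"
    using that by (simp add: entry sum.remove[of _ i] zero)
qed

lemma upper_triangular_pow:
  fixes A :: "'a :: comm_semiring_1 mat"
  assumes "A \<in> carrier_mat n n" "upper_triangular A"
  shows "upper_triangular (A ^\<^sub>m k) \<and> (\<forall>i<n. (A ^\<^sub>m k) $$ (i, i) = A $$ (i, i) ^ k)"
  by (induction k) (use assms upper_triangular_mult[of "A ^\<^sub>m _" n A] in \<open>auto simp: mult.commute\<close>)

lemma mtrace_pow_eq_sum_eigenvalues:
  fixes A :: "complex mat"
  assumes A: "A \<in> carrier_mat n n"
  obtains \<mu> where "\<And>i. i < n \<Longrightarrow> eigenvalue A (\<mu> i)" "\<And>m. mtrace (A ^\<^sub>m m) = (\<Sum>i<n. \<mu> i ^ m)"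
proof -
  obtain es where cp: "char_poly A = (\<Prod>e\<leftarrow>es. [:- e, 1:])"
    using char_poly_factorized[OF A] by blast
  obtain B P Q where "schur_decomposition A es = (B, P, Q)" by (cases "schur_decomposition A es") auto
  from schur_decomposition[OF A cp this]
  have sim: "similar_mat_wit A B P Q" and ut: "upper_triangular B" and diag: "diag_mat B = es" by auto
  note W = similar_mat_witD2[OF A sim]
  have "eigenvalue A (B $$ (i, i))" if "i < n" for i
  proof -
    have "B $$ (i, i) \<in> set es" using diag[symmetric] that W by (auto simp: diag_mat_def)
    then show ?thesis
      unfolding eigenvalue_root_char_poly[OF A] cp poly_prod_list prod_list_zero_iff by force
  qed
  moreover have "mtrace (A ^\<^sub>m m) = (\<Sum>i<n. B $$ (i, i) ^ m)" for m
  proof -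
    have "mtrace (A ^\<^sub>m m) = mtrace (P * (B ^\<^sub>m m * Q))"
      using W(1,2,5-7) by (simp add: similar_mat_wit_pow_id[OF sim] assoc_mult_mat[of P n n _ n Q n])
    also have "\<dots> = mtrace (B ^\<^sub>m m * Q * P)"
      using W(5-7) by (intro mtrace_mult_comm[of P n n]) auto
    also have "\<dots> = mtrace (B ^\<^sub>m m)"
      using W(1,2,5-7) by (simp add: assoc_mult_mat[of _ n n Q n P n])
    also have "\<dots> = (\<Sum>i<n. B $$ (i, i) ^ m)"
      unfolding mtrace_def using W(1,2,5-7) upper_triangular_pow[of B n m] ut by simp
    finally show ?thesis .
  qed
  ultimately show ?thesis by (rule that)
qed

lemma Re_mtrace_pow_less:
  fixes A :: "complex mat"
  assumes A: "A \<in> carrier_mat n n" and "0 < n" "0 < m"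
    and ev: "\<And>\<mu>. eigenvalue A \<mu> \<Longrightarrow> cmod \<mu> < c"
  shows "Re (mtrace (A ^\<^sub>m m)) < real n * c ^ m"
proof -
  obtain \<mu> where \<mu>: "\<And>i. i < n \<Longrightarrow> eigenvalue A (\<mu> i)" and tr: "mtrace (A ^\<^sub>m m) = (\<Sum>i<n. \<mu> i ^ m)"
    by (rule mtrace_pow_eq_sum_eigenvalues[OF A]) blast
  have "Re (\<mu> i ^ m) < c ^ m" if "i < n" for i
  proof -
    have "Re (\<mu> i ^ m) \<le> cmod (\<mu> i) ^ m" using complex_Re_le_cmod[of "\<mu> i ^ m"] by (simp add: norm_power)
    also have "\<dots> < c ^ m" using ev[OF \<mu>[OF that]] \<open>0 < m\<close> by (intro power_strict_mono) auto
    finally show ?thesis .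
  qed
  then have "(\<Sum>i<n. Re (\<mu> i ^ m)) < (\<Sum>i<n. c ^ m)"
    using \<open>0 < n\<close> by (intro sum_strict_mono) auto
  then show ?thesis by (simp add: tr Re_sum)
qed

section \<open>The matrix \<open>L\<close>\<close>

lemma Lmat_carrier: "Lmat a b q \<in> carrier_mat q q"
  unfolding Lmat_def by auto

text \<open>The special entries \<open>a\<^sub>1 \<plusminus> \<i> a\<^sub>2\<close> for \<open>q = 2\<close> are what this uniform formula gives, since the
  off-diagonal and the corner terms then fall on the same entries.\<close>
lemma Lmat_entry:
  assumes "i < q" "k < q"
  shows "Lmat a b q $$ (i, k) =
      (if k = i then of_real (b (int i + 1)) else 0)
    + (if k = i + 1 then of_real (a (int i + 1)) else 0)
    + (if k = i - 1 then (if 0 < i then of_real (a (int i)) else 0) else 0)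
    + (if k = q - 1 then (if i = 0 then \<i> * of_real (a (int q)) else 0) else 0)
    + (if k = 0 then (if i = q - 1 then - \<i> * of_real (a (int q)) else 0) else 0)"
proof (cases "q = 2")
  case True
  with assms have "i < 2" "k < 2" by simp_all
  then consider "i = 0" "k = 0" | "i = 0" "k = 1" | "i = 1" "k = 0" | "i = 1" "k = 1" by linarith
  then show ?thesis using True unfolding Lmat_def by cases simp_all
next
  case False
  then have L: "Lmat a b q $$ (i, k) =
      (if i = k then of_real (b (int i + 1)) else if k = i + 1 then of_real (a (int i + 1))
       else if i = k + 1 then of_real (a (int k + 1)) else if i = 0 \<and> k = q - 1 then \<i> * of_real (a (int q))
       else if i = q - 1 \<and> k = 0 then - \<i> * of_real (a (int q)) else 0)"
    using assms unfolding Lmat_def by simp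
  consider "k = i" | "k = i + 1" | "0 < i" "k = i - 1" | "k \<noteq> i" "k \<noteq> i + 1" "\<not> (0 < i \<and> k = i - 1)" by linarith
  then show ?thesis
  proof cases
    case 1
    then show ?thesis unfolding L by auto
  next
    case 2
    then show ?thesis using False assms unfolding L by auto
  next
    case 3
    then show ?thesis using False assms unfolding L by (auto simp: of_nat_diff)
  next
    case 4
    then show ?thesis using False assms unfolding L by auto
  qed
qed

lemma Lmat_hermitian:
  assumes "i < q" "k < q"
  shows "cnj (Lmat a b q $$ (i, k)) = Lmat a b q $$ (k, i)"
  using assms unfolding Lmat_def by (auto simp: complex_eq_iff)

text \<open>A vector \<open>v \<in> \<complex>\<^sup>q\<close> read as \<open>\<psi>(1), \<dots>, \<psi>(q)\<close>, extended to \<open>0\<close> and \<open>q + 1\<close> by the boundary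
  condition \<open>\<psi>(n + q) = -\<i> \<psi>(n)\<close> that the corner entries \<open>\<plusminus>\<i> a\<^sub>q\<close> of \<open>L\<close> encode.\<close>
definition twisted_ext :: "nat \<Rightarrow> complex vec \<Rightarrow> int \<Rightarrow> complex" where
  "twisted_ext q v n =
     (if n = 0 then \<i> * v $ (q - 1) else if n = int q + 1 then - \<i> * v $ 0 else v $ (nat n - 1))"

lemma twisted_ext_of_nat_Suc: "k < q \<Longrightarrow> twisted_ext q v (int k + 1) = v $ k"
  by (simp add: twisted_ext_def nat_add_distrib)

section \<open>Floquet theory\<close>

lemma periodic_mod:
  fixes f :: "int \<Rightarrow> 'a"
  assumes per: "\<And>n. f (n + int q) = f n"
  shows "f n = f (n mod int q)"
proof -
  have "\<forall>m. f (m + k * int q) = f m" for k :: int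
  proof (induction k rule: int_induct[where k = 0])
    case (step1 i)
    then show ?case by (metis per add.assoc distrib_right mult_1)
  next
    case (step2 i)
    then show ?case by (metis per add.assoc diff_add_cancel distrib_right mult_1)
  qed simp
  then show ?thesis by (metis mod_mult_div_eq add.commute mult.commute)
qed

lemma periodic_attains_max:
  fixes f :: "int \<Rightarrow> 'a :: linorder"
  assumes "\<And>n. f (n + int q) = f n" "0 < q"
  obtains n0 where "\<And>n. f n \<le> f n0"
proof -
  have "Max (f ` {0..<int q}) \<in> f ` {0..<int q}" using assms(2) by (intro Max_in) auto
  then obtain n0 where n0: "f n0 = Max (f ` {0..<int q})" by auto
  have "f n \<le> f n0" for n
    using periodic_mod[of f q n, OF assms(1)] assms(2) unfolding n0 by (simp add: Max_ge)
  then show ?thesis using that by blast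
qed

locale periodic_jacobi =
  fixes a b :: "int \<Rightarrow> real" and q :: nat
  assumes q_pos: "0 < q" and a_pos: "\<And>n. 0 < a n"
    and a_periodic: "\<And>n. a (n + int q) = a n" and b_periodic: "\<And>n. b (n + int q) = b n"
begin

lemma a_nonzero: "a n \<noteq> 0"
  using a_pos[of n] by simp

lemma jacobi_sol_shift:
  assumes "jacobi_sol a b l psi"
  shows "jacobi_sol a b l (\<lambda>n. psi (n + int q))"
  unfolding jacobi_sol_def
proof
  fix n :: int
  have "n - 1 + int q = n + int q - 1" "n + 1 + int q = n + int q + 1" by simp_all
  then show "of_real (a (n - 1)) * psi (n - 1 + int q) + of_real (b n) * psi (n + int q)
      + of_real (a n) * psi (n + 1 + int q) = l * psi (n + int q)"
    using assms a_periodic[of "n - 1"] a_periodic[of n] b_periodic[of n]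
    unfolding jacobi_sol_def by metis
qed

lemma monodromy_det:
  "jac_theta a b l (int q) * jac_phi a b l (int q + 1) - jac_theta a b l (int q + 1) * jac_phi a b l (int q) = 1"
proof -
  have "of_real (a (int q)) * (jac_theta a b l (int q) * jac_phi a b l (int q + 1)
      - jac_theta a b l (int q + 1) * jac_phi a b l (int q)) = of_real (a 0)"
    using jacobi_wronskian_constant[OF jacobi_sol_theta jacobi_sol_phi, where k = q] a_nonzero
    by (simp add: jac_theta_0_1 jac_phi_0_1 a_nonzero)
  moreover have "a (int q) = a 0" using a_periodic[of 0] by simp
  ultimately show ?thesis using a_nonzero[of 0] by simp
qed

lemma floquet_char_eq:
  assumes sol: "jacobi_sol a b l psi" and nz: "psi \<noteq> (\<lambda>_. 0)"
    and per: "\<And>n. psi (n + int q) = r * psi n"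
  shows "r\<^sup>2 - discr a b q l * r + 1 = 0"
proof -
  have dec: "psi = (\<lambda>n. psi 0 * jac_theta a b l n + psi 1 * jac_phi a b l n)"
    by (rule jacobi_sol_eq_lincomb_theta_phi[OF a_nonzero sol])
  have "psi 0 \<noteq> 0 \<or> psi 1 \<noteq> 0"
    using nz dec by auto
  moreover have "r * psi 0 = psi 0 * jac_theta a b l (int q) + psi 1 * jac_phi a b l (int q)"
    "r * psi 1 = psi 0 * jac_theta a b l (int q + 1) + psi 1 * jac_phi a b l (int q + 1)"
    using per[of 0] per[of 1] fun_cong[OF dec, of "int q"] fun_cong[OF dec, of "int q + 1"]
    by (simp_all add: add.commute)
  ultimately show ?thesis
    using char_eq_of_left_eigenvector_2x2 monodromy_det unfolding discr_def by (metis add.commute)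
qed

lemma floquet_sol_exists:
  assumes "r\<^sup>2 - discr a b q l * r + 1 = 0"
  obtains psi where "jacobi_sol a b l psi" "psi \<noteq> (\<lambda>_. 0)" "\<And>n. psi (n + int q) = r * psi n"
proof -
  obtain p0 p1 where
    ev: "r * p0 = p0 * jac_theta a b l (int q) + p1 * jac_phi a b l (int q)"
      "r * p1 = p0 * jac_theta a b l (int q + 1) + p1 * jac_phi a b l (int q + 1)"
    and nz: "p0 \<noteq> 0 \<or> p1 \<noteq> 0"
    using left_eigenvector_2x2_of_char_eq assms monodromy_det unfolding discr_def by (metis add.commute)
  define psi where "psi n = p0 * jac_theta a b l n + p1 * jac_phi a b l n" for n
  have sol: "jacobi_sol a b l psi"
    unfolding psi_def by (intro jacobi_sol_lincomb jacobi_sol_theta jacobi_sol_phi a_nonzero)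
  have psi01: "psi 0 = p0" "psi 1 = p1" by (simp_all add: psi_def jac_theta_0_1 jac_phi_0_1 a_nonzero)
  have "(\<lambda>n. psi (n + int q)) = (\<lambda>n. r * psi n)"
  proof (rule jacobi_sol_unique[OF a_nonzero jacobi_sol_shift[OF sol]])
    show "jacobi_sol a b l (\<lambda>n. r * psi n)" using jacobi_sol_lincomb[OF sol sol, of r 0] by simp
  qed (use ev psi01 in \<open>simp_all add: psi_def add.commute\<close>)
  moreover have "psi \<noteq> (\<lambda>_. 0)" using nz psi01 by auto
  ultimately show ?thesis using that sol by metis
qed

lemma abs_le_coeffs_at_max_modulus:
  assumes sol: "jacobi_sol a b (of_real x) psi" and max: "\<And>n. cmod (psi n) \<le> cmod (psi n0)"
    and nz: "psi n0 \<noteq> 0"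
  shows "\<bar>x\<bar> \<le> a (n0 - 1) + \<bar>b n0\<bar> + a n0"
proof -
  have "\<bar>x\<bar> * cmod (psi n0)
      = cmod (of_real (a (n0 - 1)) * psi (n0 - 1) + of_real (b n0) * psi n0 + of_real (a n0) * psi (n0 + 1))"
    using sol unfolding jacobi_sol_def by (simp add: norm_mult)
  also have "\<dots> \<le> cmod (of_real (a (n0 - 1)) * psi (n0 - 1)) + cmod (of_real (b n0) * psi n0)
      + cmod (of_real (a n0) * psi (n0 + 1))"
    by (rule order_trans[OF norm_triangle_ineq add_right_mono[OF norm_triangle_ineq]])
  also have "\<dots> = a (n0 - 1) * cmod (psi (n0 - 1)) + \<bar>b n0\<bar> * cmod (psi n0) + a n0 * cmod (psi (n0 + 1))"
    using a_pos[of "n0 - 1"] a_pos[of n0] by (simp add: norm_mult)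
  also have "\<dots> \<le> (a (n0 - 1) + \<bar>b n0\<bar> + a n0) * cmod (psi n0)"
    using max a_pos[of "n0 - 1"] a_pos[of n0]
    by (simp add: distrib_right add_mono mult_left_mono less_imp_le)
  finally show ?thesis using nz by simp
qed

lemma unimodular_floquet_multiplier:
  assumes "cmod (discr a b q (of_real x)) \<le> 2"
  obtains r where "cmod r = 1" "r\<^sup>2 - discr a b q (of_real x) * r + 1 = 0"
proof -
  obtain d where d: "discr a b q (of_real x) = of_real d"
    by (rule Reals_cases[OF discr_of_real_in_Reals[where a = a, OF a_nonzero]])
  with assms have "d\<^sup>2 \<le> 4" by (simp add: abs_le_square_iff[of d 2, simplified])
  then have s: "(sqrt (1 - d\<^sup>2 / 4))\<^sup>2 = 1 - d\<^sup>2 / 4" by simp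
  define r where "r = Complex (d / 2) (sqrt (1 - d\<^sup>2 / 4))"
  have "cmod r = 1" using s by (simp add: r_def cmod_def power_divide)
  moreover have "r\<^sup>2 - discr a b q (of_real x) * r + 1 = 0"
    using s by (simp add: d r_def complex_eq_iff power2_eq_square algebra_simps)
  ultimately show ?thesis using that by blast
qed

lemma bounded_jac_spectrum: "bounded (jac_spectrum a b q)"
proof -
  obtain na where na: "\<And>n. a n \<le> a na" using periodic_attains_max a_periodic q_pos by blast
  have "\<bar>b (n + int q)\<bar> = \<bar>b n\<bar>" for n using b_periodic by simp
  then obtain nb where nb: "\<And>n. \<bar>b n\<bar> \<le> \<bar>b nb\<bar>"
    using periodic_attains_max[of "\<lambda>n. \<bar>b n\<bar>"] q_pos by blast
  have "\<bar>x\<bar> \<le> 2 * a na + \<bar>b nb\<bar>" if x: "x \<in> jac_spectrum a b q" for x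
  proof -
    obtain r where r: "cmod r = 1" "r\<^sup>2 - discr a b q (of_real x) * r + 1 = 0"
      using unimodular_floquet_multiplier x unfolding jac_spectrum_def by blast
    obtain psi where sol: "jacobi_sol a b (of_real x) psi" and nz: "psi \<noteq> (\<lambda>_. 0)"
      and per: "\<And>n. psi (n + int q) = r * psi n"
      using floquet_sol_exists[OF r(2)] by blast
    have "cmod (psi (n + int q)) = cmod (psi n)" for n using per r by (simp add: norm_mult)
    then obtain n0 where max: "\<And>n. cmod (psi n) \<le> cmod (psi n0)"
      using periodic_attains_max[of "\<lambda>n. cmod (psi n)"] q_pos by blast
    have "psi n0 \<noteq> 0"
    proof
      assume "psi n0 = 0"
      then have "psi n = 0" for n using max[of n] by simp
      with nz show False by auto
    qed
    then have "\<bar>x\<bar> \<le> a (n0 - 1) + \<bar>b n0\<bar> + a n0"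
      by (rule abs_le_coeffs_at_max_modulus[OF sol max])
    then show ?thesis using na[of "n0 - 1"] na[of n0] nb[of n0] by linarith
  qed
  then show ?thesis unfolding bounded_iff by auto
qed

lemma discr_zero_imp_interior_jac_spectrum:
  assumes "discr a b q (of_real t) = 0"
  obtains d where "0 < d" "t - d \<in> jac_spectrum a b q" "t + d \<in> jac_spectrum a b q"
proof -
  obtain d where "0 < d" and d: "\<And>x. \<bar>x - t\<bar> < d \<Longrightarrow> cmod (discr a b q (of_real x)) < 2"
    using isCont_discr_of_real[where a = a and b = b and q = q and t = t, OF a_nonzero] assms
    unfolding continuous_at_eps_delta dist_real_def dist_norm by (metis diff_zero zero_less_numeral)
  then show ?thesis
    using that[of "d / 2"] d[of "t - d / 2"] d[of "t + d / 2"] unfolding jac_spectrum_def by force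
qed

lemma abs_less_jac_c_of_discr_zero:
  assumes "normalised a b q" "discr a b q (of_real t) = 0"
  shows "\<bar>t\<bar> < jac_c a b q"
proof -
  let ?S = "jac_spectrum a b q"
  obtain d where d: "0 < d" "t - d \<in> ?S" "t + d \<in> ?S"
    using discr_zero_imp_interior_jac_spectrum[OF assms(2)] by blast
  have "t + d \<le> Sup ?S" "Inf ?S \<le> t - d"
    using d bounded_jac_spectrum by (auto intro: cSup_upper cInf_lower bounded_imp_bdd_above bounded_imp_bdd_below)
  moreover have "Inf ?S = - Sup ?S" "jac_c a b q = Sup ?S"
    using assms(1) unfolding normalised_def jac_c_def lam_min_def lam_max_def by simp_all
  ultimately show ?thesis using d(1) unfolding abs_less_iff by linarith
qed

lemma Lmat_mult_vec:
  assumes v: "v \<in> carrier_vec q" and i: "i < q"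
  shows "(Lmat a b q *\<^sub>v v) $ i = of_real (a (int i)) * twisted_ext q v (int i)
    + of_real (b (int i + 1)) * twisted_ext q v (int i + 1) + of_real (a (int i + 1)) * twisted_ext q v (int i + 2)"
proof -
  have "(Lmat a b q *\<^sub>v v) $ i = (\<Sum>k<q. Lmat a b q $$ (i, k) * v $ k)"
    using Lmat_carrier[of a b q] v i by (simp add: scalar_prod_def atLeast0LessThan)
  also have "\<dots> = (\<Sum>k<q. (if k = i then of_real (b (int i + 1)) * v $ k else 0)
      + (if k = i + 1 then of_real (a (int i + 1)) * v $ k else 0)
      + (if k = i - 1 then (if 0 < i then of_real (a (int i)) * v $ k else 0) else 0)
      + (if k = q - 1 then (if i = 0 then \<i> * of_real (a (int q)) * v $ k else 0) else 0)
      + (if k = 0 then (if i = q - 1 then - \<i> * of_real (a (int q)) * v $ k else 0) else 0))"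
    using i by (intro sum.cong refl)
      (simp add: Lmat_entry distrib_right if_distrib[of "\<lambda>z. z * v $ _"] cong: if_cong split del: if_split)
  also have "\<dots> = of_real (b (int i + 1)) * v $ i
      + (if i + 1 < q then of_real (a (int i + 1)) * v $ (i + 1) else 0)
      + (if 0 < i then of_real (a (int i)) * v $ (i - 1) else 0)
      + (if i = 0 then \<i> * of_real (a (int q)) * v $ (q - 1) else 0)
      + (if i = q - 1 then - \<i> * of_real (a (int q)) * v $ 0 else 0)"
    using i q_pos less_imp_diff_less[OF i, of 1] by (simp add: sum.distrib cong: if_cong split del: if_split)
  also have "\<dots> = of_real (a (int i)) * twisted_ext q v (int i)
    + of_real (b (int i + 1)) * twisted_ext q v (int i + 1) + of_real (a (int i + 1)) * twisted_ext q v (int i + 2)"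
  proof -
    consider "q = 1" | "i = 0" "1 < q" | "0 < i" "i = q - 1" | "0 < i" "i < q - 1"
      using i by linarith
    then show ?thesis
      using i a_periodic[of 0] nat_int[of "q - 1"]
      by cases (simp_all add: twisted_ext_def nat_add_distrib of_nat_diff)
  qed
  finally show ?thesis .
qed

lemma discr_zero_of_Lmat_eigenvector:
  assumes v: "v \<in> carrier_vec q" "v \<noteq> 0\<^sub>v q" and ev: "Lmat a b q *\<^sub>v v = \<mu> \<cdot>\<^sub>v v"
  shows "discr a b q \<mu> = 0"
proof -
  let ?f = "twisted_ext q v"
  define psi where "psi = jacobi_solution a b \<mu> (?f 0) (?f 1)"
  have sol: "jacobi_sol a b \<mu> psi"
    unfolding psi_def by (rule jacobi_sol_jacobi_solution[OF a_nonzero])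
  have "of_real (a (int k)) * ?f (int k) + of_real (b (int k + 1)) * ?f (int k + 1)
      + of_real (a (int k + 1)) * ?f (int k + 2) = \<mu> * ?f (int k + 1)" if "k < q" for k
    using Lmat_mult_vec[OF v(1) that] ev v(1) that by (simp add: twisted_ext_of_nat_Suc)
  then have agree: "psi (int k) = ?f (int k)" if "k \<le> q + 1" for k
    using jacobi_sol_agree_initial_segment[OF a_nonzero sol, of q ?f k] that
    by (simp add: psi_def jacobi_solution_def)
  have f01: "?f 0 = \<i> * v $ (q - 1)" "?f 1 = v $ 0"
    using twisted_ext_of_nat_Suc[OF q_pos, of v] by (simp_all add: twisted_ext_def)
  have "(\<lambda>n. psi (n + int q)) = (\<lambda>n. - \<i> * psi n)"
  proof (rule jacobi_sol_unique[OF a_nonzero jacobi_sol_shift[OF sol]])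
    show "jacobi_sol a b \<mu> (\<lambda>n. - \<i> * psi n)" using jacobi_sol_lincomb[OF sol sol, of "- \<i>" 0] by simp
    show "psi (0 + int q) = - \<i> * psi 0"
      using agree[of q] twisted_ext_of_nat_Suc[of "q - 1" q v] q_pos f01 by (simp add: psi_def jacobi_solution_def of_nat_diff)
    show "psi (1 + int q) = - \<i> * psi 1"
      using agree[of "q + 1"] f01 q_pos by (simp add: psi_def jacobi_solution_def twisted_ext_def add.commute)
  qed
  moreover have "psi \<noteq> (\<lambda>_. 0)"
  proof
    assume "psi = (\<lambda>_. 0)"
    then have "v $ k = 0" if "k < q" for k
      using agree[of "k + 1"] twisted_ext_of_nat_Suc[OF that, of v] that by (simp add: add.commute)
    with v show False by (auto intro: eq_vecI)
  qed
  ultimately have "(- \<i>)\<^sup>2 - discr a b q \<mu> * (- \<i>) + 1 = 0"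
    using floquet_char_eq[OF sol] by metis
  then show ?thesis by (simp add: power2_eq_square)
qed

lemma eigenvalue_Lmat_norm_less_jac_c:
  assumes "normalised a b q" "eigenvalue (Lmat a b q) \<mu>"
  shows "cmod \<mu> < jac_c a b q"
proof -
  obtain v where v: "v \<in> carrier_vec q" "v \<noteq> 0\<^sub>v q" and ev: "Lmat a b q *\<^sub>v v = \<mu> \<cdot>\<^sub>v v"
    using assms(2) Lmat_carrier[of a b q] unfolding eigenvalue_def eigenvector_def by auto
  have "\<mu> \<in> \<real>"
    using hermitian_eigenvalue_real[OF Lmat_carrier Lmat_hermitian assms(2)] by blast
  then obtain t where t: "\<mu> = of_real t" by (auto elim: Reals_cases)
  have "\<bar>t\<bar> < jac_c a b q"
    using abs_less_jac_c_of_discr_zero[OF assms(1)] discr_zero_of_Lmat_eigenvector[OF v ev] t by simp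
  then show ?thesis using t by simp
qed

end

theorem mainTheorem11:
  fixes a b :: "int \<Rightarrow> real" and q :: nat
  assumes "q \<ge> 2"
    and "\<And>n. a n > 0"
    and "\<And>n. a (n + int q) = a n"
    and "\<And>n. b (n + int q) = b n"
    and "normalised a b q"
  shows "\<forall>j::nat. j \<ge> 1 \<longrightarrow>
           jac_c a b q ^ (2 * j) > Re (mtrace (Lmat a b q ^\<^sub>m (2 * j))) / real q"
proof (intro allI impI)
  interpret periodic_jacobi a b q using assms(1-4) by unfold_locales auto
  fix j :: nat assume "j \<ge> 1"
  have "Re (mtrace (Lmat a b q ^\<^sub>m (2 * j))) < real q * jac_c a b q ^ (2 * j)"
    using Lmat_carrier q_pos \<open>j \<ge> 1\<close> eigenvalue_Lmat_norm_less_jac_c[OF assms(5)]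
    by (intro Re_mtrace_pow_less) auto
  then show "jac_c a b q ^ (2 * j) > Re (mtrace (Lmat a b q ^\<^sub>m (2 * j))) / real q"
    using q_pos by (simp add: divide_less_eq mult.commute)
qed

end
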